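(* Let $G$ be a finite group acting linearly on a finite-dimensional complex vector space $V$, with $\sigma:V\to\mathbb{C}^n$ as below. Let $I\subseteq\mathbb{R}$ be an interval and $c:I\to V/\!\!/G=\sigma(V)\subseteq\mathbb{C}^n$ continuous. Then there exists a continuous $\bar c:I\to V$ with $\sigma\circ\bar c=c$.
   Context: $\sigma=(\sigma_1,\dots,\sigma_n)$ where $\sigma_1,\dots,\sigma_n$ are homogeneous generators of the algebra $\mathbb{C}[V]^G$ of $G$-invariant polynomials; the quotient $V/\!\!/G$ is identified with $\sigma(V)\subseteq\mathbb{C}^n$. (For finite $G$ all orbits are closed, so a lift of $c$ is just a curve $\bar c$ with $\sigma\circ\bar c=c$.) *)

theory Defs
  imports "HOL-Analysis.Analysis" "HOL-Algebra.Group"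
begin

definition monomial_fun :: "('i::finite \<Rightarrow> nat) \<Rightarrow> complex^'i \<Rightarrow> complex" where
  "monomial_fun \<alpha> x = (\<Prod>i\<in>UNIV. (x $ i) ^ (\<alpha> i))"

definition poly_fun :: "(complex^'i::finite \<Rightarrow> complex) \<Rightarrow> bool" where
  "poly_fun f \<longleftrightarrow> (\<exists>A c. finite A \<and> f = (\<lambda>x. \<Sum>\<alpha>\<in>A. c \<alpha> * monomial_fun \<alpha> x))"

definition homog_poly_fun :: "nat \<Rightarrow> (complex^'i::finite \<Rightarrow> complex) \<Rightarrow> bool" where
  "homog_poly_fun k f \<longleftrightarrow>
     (\<exists>c. f = (\<lambda>x. \<Sum>\<alpha>\<in>{\<alpha>::'i\<Rightarrow>nat. (\<Sum>i\<in>UNIV. \<alpha> i) = k}. c \<alpha> * monomial_fun \<alpha> x))"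

definition linear_action :: "('g, 'b) monoid_scheme \<Rightarrow> ('g \<Rightarrow> complex^'d^'d) \<Rightarrow> bool" where
  "linear_action Gr \<rho> \<longleftrightarrow> group Gr \<and> \<rho> \<one>\<^bsub>Gr\<^esub> = mat 1 \<and>
     (\<forall>g\<in>carrier Gr. \<forall>h\<in>carrier Gr. \<rho> (g \<otimes>\<^bsub>Gr\<^esub> h) = \<rho> g ** \<rho> h)"

definition invariant_poly :: "('g, 'b) monoid_scheme \<Rightarrow> ('g \<Rightarrow> complex^'d^'d)
    \<Rightarrow> (complex^'d::finite \<Rightarrow> complex) \<Rightarrow> bool" where
  "invariant_poly Gr \<rho> f \<longleftrightarrow> poly_fun f \<and> (\<forall>g\<in>carrier Gr. \<forall>x. f (\<rho> g *v x) = f x)"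

definition hom_generators :: "('g, 'b) monoid_scheme \<Rightarrow> ('g \<Rightarrow> complex^'d^'d)
    \<Rightarrow> (complex^'d::finite \<Rightarrow> complex^'n::finite) \<Rightarrow> bool" where
  "hom_generators Gr \<rho> \<sigma> \<longleftrightarrow>
     (\<forall>j. invariant_poly Gr \<rho> (\<lambda>x. \<sigma> x $ j) \<and> (\<exists>k. homog_poly_fun k (\<lambda>x. \<sigma> x $ j))) \<and>
     (\<forall>f. invariant_poly Gr \<rho> f \<longrightarrow> (\<exists>P::complex^'n \<Rightarrow> complex. poly_fun P \<and> f = P \<circ> \<sigma>))"

end

theory Submission
  imports Defs
begin

text \<open>
  Let the finite group act on \<open>V\<close> through the matrix group \<open>M\<close>, and let
  \<open>\<sigma>\<close> be a system of homogeneous generators of the invariants. Given a continuous curve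
  \<open>c\<close> in \<open>\<sigma>(V)\<close> over an interval, pick any (discontinuous) section \<open>F\<close>, \<open>\<sigma> \<circ> F = c\<close>.

  Because invariants separate orbits and \<open>\<sigma>\<close> is proper (homogeneity), \<open>F\<close> is
  orbit-continuous: nearby values of \<open>F\<close> are close up to the group action. The core result
  lifts every orbit-continuous path to a continuous path \<open>f\<close> with \<open>f(s) \<in> M\<cdot>F(s)\<close>, by
  induction on \<open>|M|\<close>: where \<open>F(s)\<close> is fixed by all of \<open>M\<close> there is no choice; near any
  other time the problem reduces to the proper stabilizer of \<open>F(s)\<close>; and local lifts are
  globalised along intervals by an abstract local-to-global principle for lifting
  problems in which lifts can be moved through any admissible value.
\<close>

section \<open>Polynomial functions\<close>

lemma monomial_fun_add:
  "monomial_fun (\<lambda>i. \<alpha> i + \<beta> i) x = monomial_fun \<alpha> x * monomial_fun \<beta> x"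
  by (simp add: monomial_fun_def power_add prod.distrib)

lemma poly_fun_monomial: "poly_fun (\<lambda>x. c * monomial_fun \<alpha> x)"
  unfolding poly_fun_def by (rule exI[of _ "{\<alpha>}"], rule exI[of _ "\<lambda>_. c"]) simp

lemma poly_fun_const: "poly_fun (\<lambda>x. c)"
  using poly_fun_monomial[of c "\<lambda>_. 0"] by (simp add: monomial_fun_def)

lemma poly_fun_add:
  assumes "poly_fun f" "poly_fun g"
  shows "poly_fun (\<lambda>x. f x + g x)"
proof -
  obtain A c where A: "finite A" "f = (\<lambda>x. \<Sum>\<alpha>\<in>A. c \<alpha> * monomial_fun \<alpha> x)"
    using assms(1) unfolding poly_fun_def by blast
  obtain B d where B: "finite B" "g = (\<lambda>x. \<Sum>\<alpha>\<in>B. d \<alpha> * monomial_fun \<alpha> x)"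
    using assms(2) unfolding poly_fun_def by blast
  let ?e = "\<lambda>\<alpha>. (if \<alpha> \<in> A then c \<alpha> else 0) + (if \<alpha> \<in> B then d \<alpha> else 0)"
  have "(\<lambda>x. f x + g x) = (\<lambda>x. \<Sum>\<alpha>\<in>A \<union> B. ?e \<alpha> * monomial_fun \<alpha> x)"
  proof
    fix x
    have extA: "(\<Sum>\<alpha>\<in>A. c \<alpha> * monomial_fun \<alpha> x) =
        (\<Sum>\<alpha>\<in>A \<union> B. (if \<alpha> \<in> A then c \<alpha> else 0) * monomial_fun \<alpha> x)"
      by (rule sum.mono_neutral_cong_left) (use A B in auto)
    have extB: "(\<Sum>\<alpha>\<in>B. d \<alpha> * monomial_fun \<alpha> x) =
        (\<Sum>\<alpha>\<in>A \<union> B. (if \<alpha> \<in> B then d \<alpha> else 0) * monomial_fun \<alpha> x)"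
      by (rule sum.mono_neutral_cong_left) (use A B in auto)
    show "f x + g x = (\<Sum>\<alpha>\<in>A \<union> B. ?e \<alpha> * monomial_fun \<alpha> x)"
      unfolding A B extA extB distrib_right sum.distrib[symmetric] by (rule refl)
  qed
  then show ?thesis
    unfolding poly_fun_def by (intro exI[of _ "A \<union> B"] exI[of _ ?e]) (use A B in simp)
qed

lemma poly_fun_sum:
  assumes "finite S" "\<And>i. i \<in> S \<Longrightarrow> poly_fun (f i)"
  shows "poly_fun (\<lambda>x. \<Sum>i\<in>S. f i x)"
  using assms
proof (induction S rule: finite_induct)
  case empty
  then show ?case using poly_fun_const[of 0] by simp
next
  case (insert a S)
  then show ?case by (simp add: poly_fun_add)
qed

lemma poly_fun_mult:
  assumes "poly_fun f" "poly_fun g"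
  shows "poly_fun (\<lambda>x. f x * g x)"
proof -
  obtain A c where A: "finite A" "f = (\<lambda>x. \<Sum>\<alpha>\<in>A. c \<alpha> * monomial_fun \<alpha> x)"
    using assms(1) unfolding poly_fun_def by blast
  obtain B d where B: "finite B" "g = (\<lambda>x. \<Sum>\<alpha>\<in>B. d \<alpha> * monomial_fun \<alpha> x)"
    using assms(2) unfolding poly_fun_def by blast
  have product: "(\<lambda>x. f x * g x) =
      (\<lambda>x. \<Sum>\<alpha>\<in>A. \<Sum>\<beta>\<in>B. (c \<alpha> * d \<beta>) * monomial_fun (\<lambda>i. \<alpha> i + \<beta> i) x)"
    unfolding A B sum_product by (simp add: monomial_fun_add mult_ac)
  show ?thesis
    unfolding product by (intro poly_fun_sum A B poly_fun_monomial)
qed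

lemma poly_fun_prod:
  assumes "finite S" "\<And>i. i \<in> S \<Longrightarrow> poly_fun (f i)"
  shows "poly_fun (\<lambda>x. \<Prod>i\<in>S. f i x)"
  using assms
proof (induction S rule: finite_induct)
  case empty
  then show ?case using poly_fun_const[of 1] by simp
next
  case (insert a S)
  then show ?case by (simp add: poly_fun_mult)
qed

lemma poly_fun_power: "poly_fun f \<Longrightarrow> poly_fun (\<lambda>x. f x ^ n)"
  using poly_fun_prod[of "{..<n}" "\<lambda>_. f"] by simp

lemma poly_fun_scale: "poly_fun f \<Longrightarrow> poly_fun (\<lambda>x. c * f x)"
  by (rule poly_fun_mult[OF poly_fun_const])

lemma poly_fun_diff:
  assumes "poly_fun f" "poly_fun g"
  shows "poly_fun (\<lambda>x. f x - g x)"
  using poly_fun_add[OF assms(1) poly_fun_scale[OF assms(2), of "-1"]] by simp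

lemma poly_fun_coord: "poly_fun (\<lambda>x. x $ i)"
proof -
  have "(\<lambda>x. x $ i) = (\<lambda>x. 1 * monomial_fun (\<lambda>j. if j = i then 1 else 0) x)"
    by (auto simp: monomial_fun_def if_distrib[of "power _"] prod.delta cong: if_cong)
  then show ?thesis
    by (metis poly_fun_monomial)
qed

lemma poly_fun_linear_comp:
  assumes "poly_fun P"
  shows "poly_fun (\<lambda>x. P (N *v x))"
proof -
  obtain A c where A: "finite A" "P = (\<lambda>x. \<Sum>\<alpha>\<in>A. c \<alpha> * monomial_fun \<alpha> x)"
    using assms unfolding poly_fun_def by blast
  have coord: "poly_fun (\<lambda>x. (N *v x) $ i)" for i
    unfolding matrix_vector_mult_def
    by (simp, intro poly_fun_sum poly_fun_mult poly_fun_const poly_fun_coord) auto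
  show ?thesis
    unfolding A monomial_fun_def
    by (intro poly_fun_sum A poly_fun_scale poly_fun_prod poly_fun_power coord) auto
qed

lemma poly_fun_continuous: "poly_fun f \<Longrightarrow> continuous_on UNIV f"
  unfolding poly_fun_def monomial_fun_def by (auto intro!: continuous_intros)

lemma homog_poly_fun_scaleR:
  fixes r :: real and x :: "complex^'i::finite"
  assumes "homog_poly_fun k f"
  shows "f (r *\<^sub>R x) = of_real r ^ k * f x"
proof -
  obtain c where c: "f = (\<lambda>x. \<Sum>\<alpha>\<in>{\<alpha>. (\<Sum>i\<in>UNIV. \<alpha> i) = k}. c \<alpha> * monomial_fun \<alpha> x)"
    using assms unfolding homog_poly_fun_def by blast
  have comp: "(r *\<^sub>R x) $ i = of_real r * x $ i" for i
    by (subst vector_scaleR_component) (rule scaleR_conv_of_real)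
  have "monomial_fun \<alpha> (r *\<^sub>R x) = of_real r ^ (\<Sum>i\<in>UNIV. \<alpha> i) * monomial_fun \<alpha> x" for \<alpha>
    by (simp only: monomial_fun_def comp power_mult_distrib prod.distrib power_sum)
  then show ?thesis
    unfolding c by (simp add: sum_distrib_left mult_ac)
qed

section \<open>Finite matrix groups and separation of orbits\<close>

text \<open>A finite group of square matrices, given as a set closed under products and
  left inverses. The image of a finite linear action is such a group; everything below
  only uses this matrix group.\<close>
definition matrix_group :: "('a::comm_ring_1^'d^'d) set \<Rightarrow> bool" where
  "matrix_group M \<longleftrightarrow> finite M \<and> mat 1 \<in> M \<and> (\<forall>A\<in>M. \<forall>B\<in>M. A ** B \<in> M) \<and>
     (\<forall>A\<in>M. \<exists>B\<in>M. B ** A = mat 1)"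

lemma linear_action_matrix_group:
  assumes la: "linear_action Gr \<rho>" and fin: "finite (carrier Gr)"
  shows "matrix_group (\<rho> ` carrier Gr)"
  unfolding matrix_group_def
proof (intro conjI ballI)
  have grp: "group Gr" and one: "\<rho> \<one>\<^bsub>Gr\<^esub> = mat 1"
    and hom: "\<And>g h. g \<in> carrier Gr \<Longrightarrow> h \<in> carrier Gr \<Longrightarrow> \<rho> (g \<otimes>\<^bsub>Gr\<^esub> h) = \<rho> g ** \<rho> h"
    using la unfolding linear_action_def by auto
  show "finite (\<rho> ` carrier Gr)" using fin by simp
  show "mat 1 \<in> \<rho> ` carrier Gr"
    using one grp group.is_monoid monoid.one_closed by (metis imageI)
  fix A assume "A \<in> \<rho> ` carrier Gr"
  then obtain g where g: "g \<in> carrier Gr" "A = \<rho> g" by blast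
  {
    fix B assume "B \<in> \<rho> ` carrier Gr"
    then obtain h where h: "h \<in> carrier Gr" "B = \<rho> h" by blast
    show "A ** B \<in> \<rho> ` carrier Gr"
      using g h hom grp group.is_monoid monoid.m_closed by (metis imageI)
  }
  have "\<rho> (inv\<^bsub>Gr\<^esub> g) ** A = mat 1"
    using g hom one grp by (metis group.inv_closed group.l_inv)
  then show "\<exists>B\<in>\<rho> ` carrier Gr. B ** A = mat 1"
    using g grp group.inv_closed by fast
qed

lemma matrix_group_mult: "matrix_group M \<Longrightarrow> A \<in> M \<Longrightarrow> B \<in> M \<Longrightarrow> A ** B \<in> M"
  unfolding matrix_group_def by blast

lemma matrix_group_inverse:
  assumes "matrix_group M" "B \<in> M"
  shows "\<exists>C\<in>M. \<forall>v. C *v (B *v v) = v"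
proof -
  obtain C where "C \<in> M" "C ** B = mat 1"
    using assms unfolding matrix_group_def by blast
  then show ?thesis
    by (metis matrix_vector_mul_assoc matrix_vector_mul_lid)
qed

lemma matrix_group_right_translation:
  assumes grp: "matrix_group M" and B: "B \<in> M"
  shows "bij_betw (\<lambda>A. A ** B) M M"
proof -
  obtain C where C: "C \<in> M" "C ** B = mat 1"
    using grp B unfolding matrix_group_def by blast
  obtain D where D: "D ** C = mat 1"
    using grp C unfolding matrix_group_def by blast
  \<comment> \<open>a left inverse in a group is also a right inverse\<close>
  have "D = B"
    by (metis C(2) D matrix_mul_assoc matrix_mul_lid matrix_mul_rid)
  then have BC: "B ** C = mat 1"
    using D by simp
  have inj: "inj_on (\<lambda>A. A ** B) M"
  proof (rule inj_onI)
    fix A A' assume "A ** B = A' ** B"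
    then have "A ** B ** C = A' ** B ** C" by simp
    then show "A = A'" by (metis BC matrix_mul_assoc matrix_mul_rid)
  qed
  moreover have "(\<lambda>A. A ** B) ` M = M"
    by (rule endo_inj_surj[OF _ _ inj]) (use grp B in \<open>auto simp: matrix_group_def\<close>)
  ultimately show ?thesis
    by (simp add: bij_betw_def)
qed

lemma matrix_group_stabilizer:
  assumes grp: "matrix_group M"
  shows "matrix_group {A\<in>M. A *v x = x}"
  unfolding matrix_group_def
proof (intro conjI ballI)
  show "finite {A\<in>M. A *v x = x}" "mat 1 \<in> {A\<in>M. A *v x = x}"
    using grp unfolding matrix_group_def by simp_all
  fix A assume A: "A \<in> {A\<in>M. A *v x = x}"
  {
    fix B assume "B \<in> {A\<in>M. A *v x = x}"
    then show "A ** B \<in> {A\<in>M. A *v x = x}"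
      using A grp unfolding matrix_group_def by (simp add: matrix_vector_mul_assoc[symmetric])
  }
  obtain C where C: "C \<in> M" "C ** A = mat 1"
    using grp A unfolding matrix_group_def by blast
  then have "C *v x = x"
    using A by (metis (mono_tags, lifting) matrix_vector_mul_assoc matrix_vector_mul_lid mem_Collect_eq)
  then show "\<exists>B\<in>{A\<in>M. A *v x = x}. B ** A = mat 1"
    using C by blast
qed

text \<open>Two disjoint finite sets of vectors are separated by a polynomial function: a
  product of affine coordinate functions vanishing on the first set, one for each point of
  the second set.\<close>
lemma poly_fun_separates_finite_sets:
  fixes X Y :: "(complex^'d::finite) set"
  assumes fin: "finite X" "finite Y" and disj: "X \<inter> Y = {}"
  shows "\<exists>q. poly_fun q \<and> (\<forall>a\<in>X. q a = 0) \<and> (\<forall>b\<in>Y. q b = 1)"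
proof -
  define ix where "ix a b = (SOME i. a $ i \<noteq> b $ i)" for a b :: "complex^'d"
  have ix: "a $ ix a b \<noteq> b $ ix a b" if "a \<in> X" "b \<in> Y" for a b
  proof -
    have "a \<noteq> b" using disj that by blast
    then have "\<exists>i. a $ i \<noteq> b $ i" by (simp add: vec_eq_iff)
    then show ?thesis
      unfolding ix_def by (rule someI_ex)
  qed
  define p where
    "p b v = (\<Prod>a\<in>X. inverse (b $ ix a b - a $ ix a b) * (v $ ix a b - a $ ix a b))" for b v
  define q where "q v = 1 - (\<Prod>b\<in>Y. 1 - p b v)" for v
  have p1: "p b b = 1" if "b \<in> Y" for b
    unfolding p_def using ix[OF _ that] by (intro prod.neutral) (metis right_minus_eq right_inverse mult.commute)
  have p0: "p b a = 0" if "a \<in> X" for a b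
    unfolding p_def using fin that by (auto simp: prod_zero_iff)
  have "poly_fun q"
    unfolding q_def p_def
    by (intro poly_fun_diff poly_fun_const poly_fun_prod fin poly_fun_scale poly_fun_coord)
  moreover have "q a = 0" if "a \<in> X" for a
    unfolding q_def using p0[OF that] by simp
  moreover have "q b = 1" if "b \<in> Y" for b
    unfolding q_def using fin p1 that by (auto simp: prod_zero_iff)
  ultimately show ?thesis by blast
qed

lemma poly_fun_group_average:
  fixes M :: "(complex^'d::finite^'d) set" and q :: "complex^'d \<Rightarrow> complex"
  assumes grp: "matrix_group M" and q: "poly_fun q"
  shows "poly_fun (\<lambda>v. \<Sum>A\<in>M. q (A *v v))"
    and "B \<in> M \<Longrightarrow> (\<Sum>A\<in>M. q (A *v (B *v v))) = (\<Sum>A\<in>M. q (A *v v))"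
proof -
  show "poly_fun (\<lambda>v. \<Sum>A\<in>M. q (A *v v))"
    using grp q unfolding matrix_group_def by (intro poly_fun_sum poly_fun_linear_comp) auto
  assume B: "B \<in> M"
  have "(\<Sum>A\<in>M. q (A *v (B *v v))) = (\<Sum>A\<in>M. q ((A ** B) *v v))"
    by (simp add: matrix_vector_mul_assoc)
  also have "\<dots> = (\<Sum>A\<in>M. q (A *v v))"
    using sum.reindex_bij_betw[OF matrix_group_right_translation[OF grp B]] .
  finally show "(\<Sum>A\<in>M. q (A *v (B *v v))) = (\<Sum>A\<in>M. q (A *v v))" .
qed

lemma hom_generators_invariant:
  assumes "hom_generators Gr \<rho> \<sigma>" "A \<in> \<rho> ` carrier Gr"
  shows "\<sigma> (A *v v) = \<sigma> v"
  using assms unfolding hom_generators_def invariant_poly_def by (auto simp: vec_eq_iff)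

text \<open>Otherwise the two (finite, disjoint) orbits are separated by a
  polynomial, whose group average is an invariant polynomial, hence a polynomial in the
  generators, taking different values at the two vectors.\<close>
lemma hom_generators_separate_orbits:
  fixes x y :: "complex^'d::finite" and \<sigma> :: "complex^'d \<Rightarrow> complex^'n::finite"
  assumes la: "linear_action Gr \<rho>" and fin: "finite (carrier Gr)"
    and hg: "hom_generators Gr \<rho> \<sigma>" and eq: "\<sigma> x = \<sigma> y"
  shows "\<exists>A\<in>\<rho> ` carrier Gr. x = A *v y"
proof (rule ccontr)
  assume not_orbit: "\<not> ?thesis"
  define M where "M = \<rho> ` carrier Gr"
  have grp: "matrix_group M"
    unfolding M_def using la fin by (rule linear_action_matrix_group)
  have finM: "finite M" and one: "mat 1 \<in> M" and mult: "\<And>A B. A \<in> M \<Longrightarrow> B \<in> M \<Longrightarrow> A ** B \<in> M"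
    using grp unfolding matrix_group_def by auto
  have "(\<lambda>A. A *v x) ` M \<inter> (\<lambda>A. A *v y) ` M = {}"
  proof (rule ccontr)
    assume "\<not> ?thesis"
    then obtain A B where AB: "A \<in> M" "B \<in> M" "A *v x = B *v y" by auto
    obtain C where C: "C \<in> M" "\<forall>v. C *v (A *v v) = v"
      using matrix_group_inverse[OF grp AB(1)] by blast
    have "x = (C ** B) *v y"
      using AB(3) C(2) by (metis matrix_vector_mul_assoc)
    then show False
      using not_orbit mult[OF C(1) AB(2)] unfolding M_def by blast
  qed
  from poly_fun_separates_finite_sets[OF finite_imageI[OF finM] finite_imageI[OF finM] this]
  obtain q where q: "poly_fun q" "\<forall>a\<in>(\<lambda>A. A *v x) ` M. q a = 0"
      "\<forall>b\<in>(\<lambda>A. A *v y) ` M. q b = 1"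
    by blast
  define f where "f v = (\<Sum>A\<in>M. q (A *v v))" for v
  have "invariant_poly Gr \<rho> f"
    unfolding invariant_poly_def f_def
    using poly_fun_group_average[OF grp q(1)] unfolding M_def by auto
  then obtain P where "f = P \<circ> \<sigma>"
    using hg unfolding hom_generators_def by blast
  then have "f x = f y" using eq by simp
  moreover have "f x = 0" and "f y = of_nat (card M)"
    using q unfolding f_def by auto
  moreover have "card M \<noteq> 0"
    using finM one by auto
  ultimately show False by simp
qed

section \<open>Lifting along intervals: from local to global\<close>

text \<open>An abstract lifting problem over a set \<open>S\<close> of reals is a relation \<open>R s y\<close>
  ("\<open>y\<close> is an admissible value at time \<open>s\<close>"); a lift is a continuous selection of
  admissible values.\<close>
definition is_lift :: "(real \<Rightarrow> 'v::metric_space \<Rightarrow> bool) \<Rightarrow> real set \<Rightarrow> (real \<Rightarrow> 'v) \<Rightarrow> bool" where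
  "is_lift R S f \<longleftrightarrow> continuous_on S f \<and> (\<forall>s\<in>S. R s (f s))"

definition locally_liftable :: "(real \<Rightarrow> 'v::metric_space \<Rightarrow> bool) \<Rightarrow> real set \<Rightarrow> bool" where
  "locally_liftable R K \<longleftrightarrow> (\<forall>s\<in>K. \<exists>d>0. \<exists>f. is_lift R (K \<inter> ball s d) f)"

lemma is_lift_subset: "is_lift R S f \<Longrightarrow> T \<subseteq> S \<Longrightarrow> is_lift R T f"
  unfolding is_lift_def using continuous_on_subset by blast

lemma is_lift_glue:
  assumes f: "is_lift R {a..b} f" and g: "is_lift R {b..c} g" and eq: "f b = g b"
  shows "is_lift R {a..c} (\<lambda>s. if s \<le> b then f s else g s)"
  unfolding is_lift_def
proof
  have left: "continuous_on {x\<in>{a..c}. x \<le> b} f"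
    by (rule continuous_on_subset[of "{a..b}"]) (use f in \<open>auto simp: is_lift_def\<close>)
  have right: "continuous_on {x\<in>{a..c}. b \<le> x} g"
    by (rule continuous_on_subset[of "{b..c}"]) (use g in \<open>auto simp: is_lift_def\<close>)
  show "continuous_on {a..c} (\<lambda>s. if s \<le> b then f s else g s)"
    using continuous_on_cases_le[OF left right continuous_on_id] eq by simp
  show "\<forall>s\<in>{a..c}. R s (if s \<le> b then f s else g s)"
    using f g unfolding is_lift_def by auto
qed

lemma is_lift_reflect:
  assumes "is_lift R S f"
  shows "is_lift (\<lambda>s. R (-s)) (uminus ` S) (\<lambda>s. f (-s))"
  unfolding is_lift_def
proof
  show "continuous_on (uminus ` S) (\<lambda>s. f (- s))"
    by (rule continuous_on_compose2[of S f]) (use assms in \<open>auto simp: is_lift_def intro: continuous_intros\<close>)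
  show "\<forall>s\<in>uminus ` S. R (- s) (f (- s))"
    using assms by (auto simp: is_lift_def)
qed

lemma locally_liftable_reflect:
  assumes "locally_liftable R K"
  shows "locally_liftable (\<lambda>s. R (-s)) (uminus ` K)"
  unfolding locally_liftable_def
proof
  fix s assume "s \<in> uminus ` K"
  then obtain d f where d: "d > 0" "is_lift R (K \<inter> ball (-s) d) f"
    using assms unfolding locally_liftable_def by force
  have "uminus ` (K \<inter> ball (-s) d) = uminus ` K \<inter> ball s d"
  proof (intro equalityI subsetI)
    fix x assume "x \<in> uminus ` K \<inter> ball s d"
    then show "x \<in> uminus ` (K \<inter> ball (-s) d)"
      by (intro image_eqI[of _ _ "-x"]) (auto simp: dist_real_def)
  qed (auto simp: dist_real_def)
  then show "\<exists>d>0. \<exists>f. is_lift (\<lambda>s. R (-s)) (uminus ` K \<inter> ball s d) f"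
    using d is_lift_reflect[OF d(2)] by metis
qed

lemma interval_right_exhaustion:
  fixes K :: "real set"
  assumes K: "is_interval K" and t0: "t0 \<in> K"
    and nomax: "\<And>s. s \<in> K \<Longrightarrow> t0 \<le> s \<Longrightarrow> \<exists>s'\<in>K. s < s'"
  shows "\<exists>b. b 0 = t0 \<and> incseq b \<and> (\<forall>n. b n \<in> K) \<and> (\<forall>s\<in>K. t0 \<le> s \<longrightarrow> (\<exists>n. s < b n))"
proof -
  let ?P = "{s\<in>K. t0 \<le> s}"
  have between: "y \<in> K" if "a \<in> K" "b \<in> K" "a \<le> y" "y \<le> b" for a b y
    using K that unfolding is_interval_1 by meson
  show ?thesis
  proof (cases "bdd_above ?P")
    case True
    define \<beta> where "\<beta> = Sup ?P"
    have ne: "?P \<noteq> {}" using t0 by auto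
    have lt: "s < \<beta>" if s: "s \<in> K" "t0 \<le> s" for s
    proof -
      obtain s' where "s' \<in> K" "s < s'" using nomax[OF s] by blast
      then show ?thesis unfolding \<beta>_def using cSup_upper[OF _ True] s by fastforce
    qed
    have t0\<beta>: "t0 < \<beta>" using lt t0 by auto
    define b where "b n = \<beta> - (\<beta> - t0) / real (Suc n)" for n
    have "b 0 = t0" by (simp add: b_def)
    moreover have "incseq b"
      unfolding incseq_def b_def using t0\<beta> by (auto intro!: divide_left_mono mult_pos_pos)
    moreover have "b n \<in> K" for n
    proof -
      have "(\<beta> - t0) / real (Suc n) \<le> \<beta> - t0" using t0\<beta> by (simp add: divide_le_eq)
      then have "t0 \<le> b n" by (simp add: b_def)
      moreover have "b n < \<beta>" using t0\<beta> by (simp add: b_def)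
      then obtain s where "s \<in> ?P" "b n < s"
        using less_cSup_iff[OF ne True] unfolding \<beta>_def by blast
      ultimately show ?thesis using between[of t0 s "b n"] t0 by auto
    qed
    moreover have "\<exists>n. s < b n" if "s \<in> K" "t0 \<le> s" for s
    proof -
      have "0 < (\<beta> - s) / (\<beta> - t0)" using lt[OF that] t0\<beta> by simp
      then obtain n where "inverse (real (Suc n)) < (\<beta> - s) / (\<beta> - t0)"
        using reals_Archimedean by blast
      then have "(\<beta> - t0) / real (Suc n) < \<beta> - s"
        using t0\<beta> by (simp add: field_simps)
      then have "s < b n" by (simp add: b_def)
      then show ?thesis ..
    qed
    ultimately show ?thesis by blast
  next
    case False
    define b where "b n = t0 + real n" for n
    have "b n \<in> K" for n
    proof -
      obtain s where "s \<in> ?P" "b n < s"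
        using False unfolding bdd_above_def by (meson not_le)
      then show ?thesis using between[of t0 s "b n"] t0 by (auto simp: b_def)
    qed
    moreover have "\<exists>n. s < b n" for s
    proof -
      obtain n where "s - t0 < real n" using reals_Archimedean2 by blast
      then have "s < b n" by (simp add: b_def)
      then show ?thesis ..
    qed
    moreover have "b 0 = t0" "incseq b" by (simp_all add: b_def incseq_def)
    ultimately show ?thesis by blast
  qed
qed

text \<open>The key hypothesis: a lift can be moved so as to pass through any admissible
  value at any given time. For orbit relations this holds because the group acts
  transitively on each fibre.\<close>
locale rebasable_lifts =
  fixes R :: "real \<Rightarrow> 'v::metric_space \<Rightarrow> bool"
  assumes rebase: "\<And>S f p y. is_lift R S f \<Longrightarrow> p \<in> S \<Longrightarrow> R p y \<Longrightarrow> \<exists>g. is_lift R S g \<and> g p = y"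
begin

lemma glue_lifts:
  assumes f: "is_lift R {a..b} f" and g: "is_lift R {b..c} g" and abc: "a \<le> b" "b \<le> c"
  shows "\<exists>h. is_lift R {a..c} h \<and> (\<forall>s\<in>{a..b}. h s = f s)"
proof -
  have "R b (f b)" using f abc unfolding is_lift_def by auto
  then obtain g' where g': "is_lift R {b..c} g'" "g' b = f b"
    using rebase[OF g, of b] abc by auto
  show ?thesis
    by (rule exI[of _ "\<lambda>s. if s \<le> b then f s else g' s"])
       (use is_lift_glue[OF f g'(1)] g'(2) in auto)
qed

lemma segment_lift_trans:
  assumes "\<exists>f. is_lift R {min x y..max x y} f" "\<exists>f. is_lift R {min y z..max y z} f"
  shows "\<exists>f. is_lift R {min x z..max x z} f"
proof (cases "min x z \<le> y \<and> y \<le> max x z")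
  case True
  then consider "x \<le> y" "y \<le> z" | "z \<le> y" "y \<le> x"
    by linarith
  then show ?thesis
  proof cases
    case 1
    then have "min x y = x" "max x y = y" "min y z = y" "max y z = z" "min x z = x" "max x z = z"
      by auto
    then show ?thesis using assms glue_lifts[of x y _ z] 1 by metis
  next
    case 2
    then have "min x y = y" "max x y = x" "min y z = z" "max y z = y" "min x z = z" "max x z = x"
      by auto
    then show ?thesis using assms glue_lifts[of z y _ x] 2 by metis
  qed
next
  case False
  then have "{min x z..max x z} \<subseteq> {min x y..max x y} \<or> {min x z..max x z} \<subseteq> {min y z..max y z}"
    by (cases "x \<le> z"; cases "y \<le> x"; cases "y \<le> z") (auto simp: min_def max_def)
  then show ?thesis using assms is_lift_subset by blast
qed

text \<open>Local lifts yield lifts over every compact segment of an interval: having a lift on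
  the segment joining two points is an equivalence relation with open classes on the
  connected set \<open>K\<close>.\<close>
lemma segment_lift:
  assumes K: "is_interval K" and loc: "locally_liftable R K" and xy: "x \<in> K" "y \<in> K"
  shows "\<exists>f. is_lift R {min x y..max x y} f"
proof -
  let ?Q = "\<lambda>a b. \<exists>f. is_lift R {min a b..max a b} f"
  have sym: "\<And>a b. \<lbrakk>?Q a b; a \<in> K; b \<in> K\<rbrakk> \<Longrightarrow> ?Q b a"
    by (simp add: min.commute max.commute)
  have trans: "\<And>a b c. \<lbrakk>?Q a b; ?Q b c; a \<in> K; b \<in> K; c \<in> K\<rbrakk> \<Longrightarrow> ?Q a c"
    using segment_lift_trans by blast
  have open_classes: "\<exists>T. openin (top_of_set K) T \<and> a \<in> T \<and> (\<forall>x\<in>T. ?Q a x)"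
    if a: "a \<in> K" for a
  proof -
    obtain d f where d: "d > 0" "is_lift R (K \<inter> ball a d) f"
      using loc a unfolding locally_liftable_def by blast
    have Kd: "is_interval (K \<inter> ball a d)"
      using K by (simp add: is_interval_Int is_interval_ball_real)
    have "{min a x..max a x} \<subseteq> K \<inter> ball a d" if x: "x \<in> K \<inter> ball a d" for x
    proof
      fix s assume "s \<in> {min a x..max a x}"
      moreover have "min a x \<in> K \<inter> ball a d" "max a x \<in> K \<inter> ball a d"
        using a d(1) x by (simp_all add: min_def max_def)
      ultimately show "s \<in> K \<inter> ball a d"
        using Kd unfolding is_interval_1 by (meson atLeastAtMost_iff)
    qed
    then have "\<forall>x\<in>K \<inter> ball a d. ?Q a x"
      using d(2) is_lift_subset by blast
    moreover have "openin (top_of_set K) (K \<inter> ball a d)"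
      by (rule openin_open_Int) simp
    ultimately show ?thesis
      using a d(1) by (intro exI[of _ "K \<inter> ball a d"]) simp
  qed
  show ?thesis
    using connected_equivalence_relation[OF is_interval_connected[OF K] xy sym trans open_classes] .
qed

lemma extend_lift:
  assumes K: "is_interval K" and loc: "locally_liftable R K"
    and f: "is_lift R {a..b} f" and abc: "a \<le> b" "b \<le> c" "b \<in> K" "c \<in> K"
  shows "\<exists>g. is_lift R {a..c} g \<and> (\<forall>s\<in>{a..b}. g s = f s)"
proof -
  obtain h where "is_lift R {b..c} h"
    using segment_lift[OF K loc abc(3,4)] abc by auto
  then show ?thesis using glue_lifts[OF f _ abc(1,2)] by blast
qed

lemma nested_lifts:
  assumes K: "is_interval K" and loc: "locally_liftable R K"
    and b0: "b 0 = t0" and bmono: "incseq b" and bK: "\<And>n. b n \<in> K"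
  shows "\<exists>L. \<forall>n. is_lift R {t0..b n} (L n) \<and> (\<forall>s\<in>{t0..b n}. L (Suc n) s = L n s)"
proof (rule dependent_nat_choice)
  show "\<exists>f. is_lift R {t0..b 0} f"
    using segment_lift[OF K loc bK[of 0] bK[of 0]] b0 by simp
  fix f n assume "is_lift R {t0..b n} f"
  then obtain g where "is_lift R {t0..b (Suc n)} g" "\<forall>s\<in>{t0..b n}. g s = f s"
    using extend_lift[OF K loc, of t0 "b n" f "b (Suc n)"] bK bmono b0
    by (metis incseq_Suc_iff incseq_def zero_le)
  then show "\<exists>g. is_lift R {t0..b (Suc n)} g \<and> (\<forall>s\<in>{t0..b n}. g s = f s)"
    by blast
qed

lemma exhaustion_lift:
  assumes K: "is_interval K" and loc: "locally_liftable R K"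
    and b0: "b 0 = t0" and bmono: "incseq b" and bK: "\<And>n. b n \<in> K"
    and bex: "\<And>s. s \<in> K \<Longrightarrow> t0 \<le> s \<Longrightarrow> \<exists>n. s < b n"
  shows "\<exists>f. is_lift R {s\<in>K. t0 \<le> s} f"
proof -
  obtain L where L: "\<And>n. is_lift R {t0..b n} (L n)"
    and L_step: "\<And>n s. s \<in> {t0..b n} \<Longrightarrow> L (Suc n) s = L n s"
    using nested_lifts[OF K loc b0 bmono bK] by blast
  have coherent: "L n s = L m s" if "m \<le> n" "s \<in> {t0..b m}" for m n s
    using that
  proof (induction n rule: dec_induct)
    case (step k)
    have "s \<in> {t0..b k}"
      using step bmono by (auto simp: incseq_def intro: order_trans)
    then show ?case using L_step step.IH step.prems by simp
  qed simp
  define N where "N s = (SOME n. s < b n)" for s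
  have N: "s < b (N s)" if "s \<in> K" "t0 \<le> s" for s
    unfolding N_def using bex[OF that] by (rule someI_ex)
  define f where "f s = L (N s) s" for s
  have f_eq: "f s = L n s" if "s \<in> K" "t0 \<le> s" "s \<le> b n" for s n
  proof (cases "N s \<le> n")
    case True
    then show ?thesis unfolding f_def using coherent[of "N s" n s] N[OF that(1,2)] that by simp
  next
    case False
    then show ?thesis unfolding f_def using coherent[of n "N s" s] that by simp
  qed
  have "continuous_on {s \<in> K. t0 \<le> s} f"
    unfolding continuous_on_iff
  proof (intro ballI allI impI)
    fix s e assume s: "s \<in> {s \<in> K. t0 \<le> s}" and e: "(0::real) < e"
    let ?n = "N s"
    have sn: "s < b ?n" using N s by force
    \<comment> \<open>near \<open>s\<close>, \<open>f\<close> agrees with the continuous lift \<open>L (N s)\<close>\<close>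
    have "continuous_on {t0..b ?n} (L ?n)" and "s \<in> {t0..b ?n}"
      using L[of ?n] s sn unfolding is_lift_def by auto
    then obtain d where d: "d > 0" "\<forall>x\<in>{t0..b ?n}. dist x s < d \<longrightarrow> dist (L ?n x) (L ?n s) < e"
      using e unfolding continuous_on_iff by blast
    show "\<exists>d>0. \<forall>x\<in>{s \<in> K. t0 \<le> s}. dist x s < d \<longrightarrow> dist (f x) (f s) < e"
    proof (intro exI[of _ "min d (b ?n - s)"] conjI ballI impI)
      show "0 < min d (b ?n - s)" using d sn by simp
      fix x assume x: "x \<in> {s \<in> K. t0 \<le> s}" "dist x s < min d (b ?n - s)"
      then have "x \<le> b ?n" by (auto simp: dist_real_def)
      then show "dist (f x) (f s) < e"
        using d x s sn f_eq[of x ?n] f_eq[of s ?n] by auto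
    qed
  qed
  moreover have "R s (f s)" if "s \<in> K" "t0 \<le> s" for s
    using L[of "N s"] N[OF that] f_eq[OF that, of "N s"] that unfolding is_lift_def by auto
  ultimately show ?thesis
    unfolding is_lift_def by blast
qed

lemma right_half_lift:
  assumes K: "is_interval K" and loc: "locally_liftable R K" and t0: "t0 \<in> K"
  shows "\<exists>f. is_lift R {s\<in>K. t0 \<le> s} f"
proof (cases "\<exists>m\<in>K. t0 \<le> m \<and> (\<forall>s\<in>K. s \<le> m)")
  case True
  then obtain m where m: "m \<in> K" "t0 \<le> m" "\<forall>s\<in>K. s \<le> m" by blast
  have "{s\<in>K. t0 \<le> s} = {min t0 m..max t0 m}"
  proof (intro equalityI subsetI)
    fix x assume "x \<in> {min t0 m..max t0 m}"
    then have "t0 \<le> x" "x \<le> m" using m(2) by auto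
    then show "x \<in> {s\<in>K. t0 \<le> s}"
      using K t0 m(1) unfolding is_interval_1 by blast
  qed (use m in auto)
  then show ?thesis using segment_lift[OF K loc t0 m(1)] by metis
next
  case False
  have "\<exists>s'\<in>K. s < s'" if "s \<in> K" "t0 \<le> s" for s
  proof -
    have "\<not> (\<forall>s'\<in>K. s' \<le> s)" using False that by blast
    then show ?thesis by (auto simp: not_le)
  qed
  then obtain b where "b 0 = t0" "incseq b" "\<And>n. b n \<in> K" "\<And>s. s \<in> K \<Longrightarrow> t0 \<le> s \<Longrightarrow> \<exists>n. s < b n"
    using interval_right_exhaustion[OF K t0] by blast
  then show ?thesis using exhaustion_lift[OF K loc] by blast
qed

end

lemma rebasable_lifts_reflect:
  assumes "rebasable_lifts R"
  shows "rebasable_lifts (\<lambda>s. R (-s))"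
proof
  fix S f p y
  assume f: "is_lift (\<lambda>s. R (- s)) S f" and p: "p \<in> S" and y: "R (- p) y"
  have "is_lift R (uminus ` S) (\<lambda>s. f (-s))"
    using is_lift_reflect[OF f] by simp
  moreover have "-p \<in> uminus ` S" using p by simp
  ultimately obtain g where g: "is_lift R (uminus ` S) g" "g (-p) = y"
    using rebasable_lifts.rebase[OF assms] y by blast
  have "is_lift (\<lambda>s. R (- s)) S (\<lambda>s. g (-s))"
    using is_lift_reflect[OF g(1)] by (simp add: image_image)
  then show "\<exists>g. is_lift (\<lambda>s. R (- s)) S g \<and> g p = y"
    using g(2) by (intro exI[of _ "\<lambda>s. g (-s)"]) simp
qed

text \<open>Global lifting over an interval: lift the two halves on either side of a point
  (the left half by time reversal), make them agree at that point and glue.\<close>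
lemma interval_lift:
  assumes reb: "rebasable_lifts R" and K: "is_interval K" and loc: "locally_liftable R K"
  shows "\<exists>f. is_lift R K f"
proof (cases "K = {}")
  case True
  then show ?thesis by (auto simp: is_lift_def)
next
  case False
  then obtain t0 where t0: "t0 \<in> K" by blast
  obtain f where f: "is_lift R {s\<in>K. t0 \<le> s} f"
    using rebasable_lifts.right_half_lift[OF reb K loc t0] by blast
  have "is_interval (uminus ` K)" "-t0 \<in> uminus ` K"
    using K t0 by auto
  then obtain g where "is_lift (\<lambda>s. R (-s)) {s\<in>uminus ` K. -t0 \<le> s} g"
    using rebasable_lifts.right_half_lift[OF rebasable_lifts_reflect[OF reb] _
        locally_liftable_reflect[OF loc]] by blast
  from is_lift_reflect[OF this]
  have "is_lift R (uminus ` {s\<in>uminus ` K. -t0 \<le> s}) (\<lambda>s. g (-s))"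
    by simp
  moreover have "uminus ` {s\<in>uminus ` K. -t0 \<le> s} = {s\<in>K. s \<le> t0}"
  proof (intro equalityI subsetI)
    fix x assume "x \<in> {s\<in>K. s \<le> t0}"
    then show "x \<in> uminus ` {s\<in>uminus ` K. -t0 \<le> s}"
      by (intro image_eqI[of _ _ "-x"]) auto
  qed auto
  ultimately have g: "is_lift R {s\<in>K. s \<le> t0} (\<lambda>s. g (-s))"
    by simp
  have "R t0 (f t0)" using f t0 by (auto simp: is_lift_def)
  then obtain h where h: "is_lift R {s\<in>K. s \<le> t0} h" "h t0 = f t0"
    using rebasable_lifts.rebase[OF reb g, of t0] t0 by auto
  have "continuous_on K (\<lambda>s. if s \<le> t0 then h s else f s)"
    by (rule continuous_on_cases_le[where h="\<lambda>s. s"])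
       (use f h in \<open>auto simp: is_lift_def intro: continuous_on_id\<close>)
  then show ?thesis
    using f h by (intro exI[of _ "\<lambda>s. if s \<le> t0 then h s else f s"]) (auto simp: is_lift_def)
qed

text \<open>Lifting over a relatively open subset \<open>U\<close> of an interval: each connected component
  of \<open>U\<close> is an interval and carries a lift; these lifts together are continuous since
  \<open>U\<close> is locally an interval.\<close>
lemma open_subset_lift:
  assumes reb: "rebasable_lifts R" and J: "is_interval J" and UJ: "U \<subseteq> J"
    and U_open: "\<And>s. s \<in> U \<Longrightarrow> \<exists>d>0. J \<inter> ball s d \<subseteq> U"
    and loc: "locally_liftable R U"
  shows "\<exists>f. is_lift R U f"
proof -
  have comp_lift: "\<exists>f. is_lift R (connected_component_set U s) f" for s
  proof (rule interval_lift[OF reb])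
    show "is_interval (connected_component_set U s)"
      by (simp add: is_interval_connected_1)
    show "locally_liftable R (connected_component_set U s)"
      unfolding locally_liftable_def
    proof
      fix u assume "u \<in> connected_component_set U s"
      then obtain d f where "d > 0" "is_lift R (U \<inter> ball u d) f"
        using loc connected_component_subset unfolding locally_liftable_def by blast
      moreover have "connected_component_set U s \<inter> ball u d \<subseteq> U \<inter> ball u d"
        using connected_component_subset by blast
      ultimately show "\<exists>d>0. \<exists>f. is_lift R (connected_component_set U s \<inter> ball u d) f"
        using is_lift_subset by blast
    qed
  qed
  define lc where "lc C = (SOME f. is_lift R C f)" for C
  have lc: "is_lift R (connected_component_set U s) (lc (connected_component_set U s))" for s
    unfolding lc_def using comp_lift by (rule someI_ex)
  define f where "f s = lc (connected_component_set U s) s" for s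
  have "continuous_on U f"
    unfolding continuous_on_iff
  proof (intro ballI allI impI)
    fix s e assume sU: "s \<in> U" and e: "(0::real) < e"
    define C where "C = connected_component_set U s"
    obtain d where d: "d > 0" "J \<inter> ball s d \<subseteq> U" using U_open[OF sU] by blast
    \<comment> \<open>the neighbourhood \<open>J \<inter> ball s d\<close> is connected, so it lies in the component of \<open>s\<close>\<close>
    have sub: "J \<inter> ball s d \<subseteq> C"
      unfolding C_def
    proof (rule connected_component_maximal)
      show "s \<in> J \<inter> ball s d" using sU UJ d by auto
      show "connected (J \<inter> ball s d)"
        using J by (simp add: is_interval_connected is_interval_Int is_interval_ball_real)
    qed (rule d(2))
    have f_C: "f u = lc C u" if "u \<in> C" for u
      using connected_component_eq[OF that[unfolded C_def]] unfolding f_def C_def by simp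
    have "s \<in> C" unfolding C_def using sU by simp
    moreover have "continuous_on C (lc C)" using lc unfolding C_def is_lift_def by blast
    ultimately obtain d' where d': "d' > 0" "\<forall>x\<in>C. dist x s < d' \<longrightarrow> dist (lc C x) (lc C s) < e"
      using e unfolding continuous_on_iff by blast
    show "\<exists>d>0. \<forall>x\<in>U. dist x s < d \<longrightarrow> dist (f x) (f s) < e"
    proof (intro exI[of _ "min d d'"] conjI ballI impI)
      show "min d d' > 0" using d d' by simp
      fix x assume "x \<in> U" "dist x s < min d d'"
      then have "x \<in> C" using sub UJ by (auto simp: dist_commute)
      then show "dist (f x) (f s) < e" using d' \<open>s \<in> C\<close> \<open>dist x s < min d d'\<close> f_C by auto
    qed
  qed
  moreover have "R s (f s)" if "s \<in> U" for s
    using lc[of s] that unfolding f_def is_lift_def by auto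
  ultimately show ?thesis
    unfolding is_lift_def by blast
qed

section \<open>Lifting orbit-continuous paths through a finite matrix group\<close>

text \<open>This is exactly what
  continuity of a curve in the orbit space means.\<close>
definition orbit_continuous :: "(complex^'d::finite^'d) set \<Rightarrow> real set \<Rightarrow> (real \<Rightarrow> complex^'d) \<Rightarrow> bool" where
  "orbit_continuous M J F \<longleftrightarrow>
     (\<forall>t\<in>J. \<forall>e>0. \<exists>d>0. \<forall>s\<in>J. dist s t < d \<longrightarrow> (\<exists>A\<in>M. dist (A *v F s) (F t) < e))"

definition in_orbit :: "(complex^'d::finite^'d) set \<Rightarrow> (real \<Rightarrow> complex^'d) \<Rightarrow> real \<Rightarrow> complex^'d \<Rightarrow> bool" where
  "in_orbit M F s y \<longleftrightarrow> (\<exists>A\<in>M. y = A *v F s)"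

lemma orbit_continuousD:
  "orbit_continuous M J F \<Longrightarrow> t \<in> J \<Longrightarrow> e > 0 \<Longrightarrow>
    \<exists>d>0. \<forall>s\<in>J. dist s t < d \<longrightarrow> (\<exists>A\<in>M. dist (A *v F s) (F t) < e)"
  unfolding orbit_continuous_def by blast

lemma continuous_on_matrix_vector [continuous_intros]:
  fixes N :: "complex^'d::finite^'e::finite"
  shows "continuous_on S f \<Longrightarrow> continuous_on S (\<lambda>s. N *v f s)"
  using continuous_on_compose2[OF matrix_vector_mult_linear_continuous_on[of UNIV N]] by simp

lemma finite_matrices_lipschitz:
  fixes M :: "(complex^'d::finite^'d) set"
  assumes "finite M"
  shows "\<exists>K>0. \<forall>A\<in>M. \<forall>u v. dist (A *v u) (A *v v) \<le> K * dist u v"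
proof (intro exI[of _ "1 + (\<Sum>A\<in>M. onorm ((*v) A))"] conjI ballI allI)
  have nonneg: "0 \<le> onorm ((*v) A)" for A :: "complex^'d^'d"
    by (rule onorm_pos_le[OF matrix_vector_mul_bounded_linear])
  then show "0 < 1 + (\<Sum>A\<in>M. onorm ((*v) A))"
    by (simp add: sum_nonneg add_pos_nonneg)
  fix A u v assume A: "A \<in> M"
  have "norm (A *v (u - v)) \<le> onorm ((*v) A) * norm (u - v)"
    by (rule onorm[OF matrix_vector_mul_bounded_linear])
  also have "\<dots> \<le> (1 + (\<Sum>A\<in>M. onorm ((*v) A))) * norm (u - v)"
    using member_le_sum[of A M "\<lambda>A. onorm ((*v) A)"] A assms nonneg
    by (intro mult_right_mono) simp_all
  finally show "dist (A *v u) (A *v v) \<le> (1 + (\<Sum>A\<in>M. onorm ((*v) A))) * dist u v"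
    by (simp add: dist_norm matrix_vector_mult_diff_distrib)
qed

lemma finite_matrices_small_displacement:
  fixes M :: "(complex^'d::finite^'d) set"
  assumes "finite M"
  shows "\<exists>\<mu>>0. \<forall>A\<in>M. dist (A *v x) x < \<mu> \<longrightarrow> A *v x = x"
proof -
  define D where "D = insert 1 ((\<lambda>A. dist (A *v x) x) ` {A\<in>M. A *v x \<noteq> x})"
  have fin: "finite D" using assms unfolding D_def by simp
  have "\<forall>d\<in>D. 0 < d" unfolding D_def by auto
  then have pos: "Min D > 0" using fin by (simp add: D_def)
  show ?thesis
  proof (intro exI[of _ "Min D"] conjI ballI impI pos)
    fix A assume A: "A \<in> M" and small: "dist (A *v x) x < Min D"
    show "A *v x = x"
    proof (rule ccontr)
      assume "A *v x \<noteq> x"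
      then have "dist (A *v x) x \<in> D" using A unfolding D_def by blast
      then show False using Min_le[OF fin] small by fastforce
    qed
  qed
qed

lemma lipschitz_displacement:
  fixes g :: "'a::metric_space \<Rightarrow> 'a"
  assumes lip: "dist (g x) (g y) \<le> K * dist x y"
    and y: "dist y x < \<epsilon>" and z: "dist z x < \<epsilon>" and gy: "dist (g y) z < K * \<epsilon>" and K: "K > 0"
  shows "dist (g x) x < (2 * K + 1) * \<epsilon>"
proof -
  have "dist (g x) x \<le> dist (g x) (g y) + dist (g y) z + dist z x"
    using dist_triangle[of "g x" x "g y"] dist_triangle[of "g y" x z] by linarith
  moreover have "K * dist x y < K * \<epsilon>"
    using y K by (simp add: dist_commute)
  ultimately show ?thesis
    using lip gy z by (simp add: algebra_simps)
qed

text \<open>Orbit lifts can be rebased: composing with a group element moves the lift through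
  any point of the orbit.\<close>
lemma in_orbit_rebasable:
  assumes grp: "matrix_group M"
  shows "rebasable_lifts (in_orbit M F)"
proof (rule rebasable_lifts.intro)
  fix S f p y
  assume f: "is_lift (in_orbit M F) S f" and p: "p \<in> S" and y: "in_orbit M F p y"
  obtain B where B: "B \<in> M" "f p = B *v F p" using f p unfolding is_lift_def in_orbit_def by blast
  obtain A where A: "A \<in> M" "y = A *v F p" using y unfolding in_orbit_def by blast
  obtain C where C: "C \<in> M" "\<forall>v. C *v (B *v v) = v" using matrix_group_inverse[OF grp B(1)] by blast
  have AC: "A ** C \<in> M" using matrix_group_mult[OF grp A(1) C(1)] .
  let ?g = "\<lambda>s. (A ** C) *v f s"
  have "continuous_on S ?g"
    using f unfolding is_lift_def by (intro continuous_intros) auto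
  moreover have "in_orbit M F s (?g s)" if s: "s \<in> S" for s
  proof -
    obtain D where D: "D \<in> M" "f s = D *v F s" using f s unfolding is_lift_def in_orbit_def by blast
    have "?g s = (A ** C ** D) *v F s" by (simp add: D matrix_vector_mul_assoc)
    moreover have "A ** C ** D \<in> M" using matrix_group_mult[OF grp AC D(1)] .
    ultimately show ?thesis unfolding in_orbit_def by blast
  qed
  moreover have "?g p = y"
  proof -
    have "?g p = A *v (C *v (B *v F p))"
      by (simp add: B(2) matrix_vector_mul_assoc matrix_mul_assoc)
    then show ?thesis using A(2) C(2) by simp
  qed
  ultimately show "\<exists>g. is_lift (in_orbit M F) S g \<and> g p = y"
    unfolding is_lift_def by blast
qed

text \<open>Near a time \<open>s\<close>, move \<open>F\<close> within its orbits so that it stays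
  close to \<open>x = F s\<close>. The modified path is orbit-continuous for the stabilizer of \<open>x\<close>:
  an element relating two nearby values moves \<open>x\<close> only a little, hence fixes \<open>x\<close>.\<close>
lemma orbit_continuous_stabilizer:
  fixes F :: "real \<Rightarrow> complex^'d::finite"
  assumes grp: "matrix_group M" and oc: "orbit_continuous M J F" and s: "s \<in> J"
  shows "\<exists>\<delta>>0. \<exists>F'. orbit_continuous {A\<in>M. A *v F s = F s} (J \<inter> ball s \<delta>) F' \<and>
           (\<forall>u\<in>J \<inter> ball s \<delta>. \<exists>B\<in>M. F' u = B *v F u)"
proof -
  define x where "x = F s"
  have fin: "finite M" using grp unfolding matrix_group_def by simp
  obtain K where K: "K > 0" "\<And>A u v. A \<in> M \<Longrightarrow> dist (A *v u) (A *v v) \<le> K * dist u v"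
    using finite_matrices_lipschitz[OF fin] by blast
  obtain \<mu> where \<mu>: "\<mu> > 0" "\<And>A. A \<in> M \<Longrightarrow> dist (A *v x) x < \<mu> \<Longrightarrow> A *v x = x"
    using finite_matrices_small_displacement[OF fin] by blast
  define \<epsilon> where "\<epsilon> = \<mu> / (2 * K + 1)"
  have \<epsilon>: "\<epsilon> > 0" "(2 * K + 1) * \<epsilon> = \<mu>"
    using \<mu>(1) K(1) unfolding \<epsilon>_def by simp_all
  obtain \<delta> where \<delta>: "\<delta> > 0" "\<forall>u\<in>J. dist u s < \<delta> \<longrightarrow> (\<exists>A\<in>M. dist (A *v F u) x < \<epsilon>)"
    using orbit_continuousD[OF oc s \<epsilon>(1)] unfolding x_def by blast
  define J' where "J' = J \<inter> ball s \<delta>"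
  define B where "B u = (SOME A. A \<in> M \<and> dist (A *v F u) x < \<epsilon>)" for u
  have "B u \<in> M \<and> dist (B u *v F u) x < \<epsilon>" if "u \<in> J'" for u
    unfolding B_def by (rule someI_ex) (use \<delta> that in \<open>auto simp: J'_def dist_commute\<close>)
  then have B: "B u \<in> M" "dist (B u *v F u) x < \<epsilon>" if "u \<in> J'" for u
    using that by auto
  define F' where "F' u = B u *v F u" for u
  have "orbit_continuous {A\<in>M. A *v x = x} J' F'"
    unfolding orbit_continuous_def
  proof (intro ballI allI impI)
    fix t e assume t: "t \<in> J'" and e: "(0::real) < e"
    define e' where "e' = min (e / K) \<epsilon>"
    have "e' > 0" "e' \<le> e / K" "e' \<le> \<epsilon>"
      using e K(1) \<epsilon>(1) unfolding e'_def by simp_all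
    then have e': "e' > 0" "K * e' \<le> e" "K * e' \<le> K * \<epsilon>"
      using K(1) by (simp_all add: pos_le_divide_eq mult.commute)
    obtain d where d: "d > 0" "\<forall>u\<in>J. dist u t < d \<longrightarrow> (\<exists>A\<in>M. dist (A *v F u) (F t) < e')"
      using orbit_continuousD[OF oc _ e'(1)] t unfolding J'_def by blast
    show "\<exists>d>0. \<forall>u\<in>J'. dist u t < d \<longrightarrow> (\<exists>A\<in>{A\<in>M. A *v x = x}. dist (A *v F' u) (F' t) < e)"
    proof (intro exI[of _ d] conjI ballI impI)
      fix u assume u: "u \<in> J'" and du: "dist u t < d"
      then obtain A where A: "A \<in> M" "dist (A *v F u) (F t) < e'"
        using d unfolding J'_def by auto
      obtain Bi where Bi: "Bi \<in> M" "\<forall>v. Bi *v (B u *v v) = v"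
        using matrix_group_inverse[OF grp B(1)[OF u]] by blast
      \<comment> \<open>\<open>C\<close> relates the modified values at \<open>u\<close> and \<open>t\<close>\<close>
      define C where "C = B t ** A ** Bi"
      have CM: "C \<in> M"
        unfolding C_def by (intro matrix_group_mult[OF grp] B t A Bi)
      have "C *v F' u = B t *v (A *v F u)"
        unfolding C_def F'_def by (simp add: matrix_vector_mul_assoc[symmetric] Bi(2))
      then have "dist (C *v F' u) (F' t) \<le> K * dist (A *v F u) (F t)"
        unfolding F'_def using K(2)[OF B(1)[OF t]] by simp
      also have "\<dots> < K * e'" using A K by simp
      finally have close: "dist (C *v F' u) (F' t) < K * e'" .
      have "dist (C *v x) x < (2 * K + 1) * \<epsilon>"
      proof (rule lipschitz_displacement[where g="(*v) C" and y="F' u" and z="F' t"])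
        show "dist (C *v x) (C *v F' u) \<le> K * dist x (F' u)" by (rule K(2)[OF CM])
        show "dist (C *v F' u) (F' t) < K * \<epsilon>" using close e'(3) by linarith
      qed (use B(2)[OF u] B(2)[OF t] K(1) in \<open>simp_all add: F'_def\<close>)
      then have "C *v x = x" using \<mu>(2)[OF CM] \<epsilon>(2) by simp
      moreover have "dist (C *v F' u) (F' t) < e"
        using close e'(2) by linarith
      ultimately show "\<exists>A\<in>{A\<in>M. A *v x = x}. dist (A *v F' u) (F' t) < e"
        using CM by blast
    qed (rule d(1))
  qed
  moreover have "\<forall>u\<in>J'. \<exists>B\<in>M. F' u = B *v F u"
    using B unfolding F'_def by blast
  ultimately show ?thesis
    using \<delta>(1) unfolding J'_def x_def by (intro exI[of _ \<delta>] conjI exI[of _ F']) simp_all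
qed

definition nonfixed_times :: "(complex^'d::finite^'d) set \<Rightarrow> real set \<Rightarrow> (real \<Rightarrow> complex^'d) \<Rightarrow> real set" where
  "nonfixed_times M J F = {s\<in>J. \<exists>A\<in>M. A *v F s \<noteq> F s}"

lemma orbit_continuous_nonfixed_open:
  fixes F :: "real \<Rightarrow> complex^'d::finite"
  assumes grp: "matrix_group M" and oc: "orbit_continuous M J F"
    and s: "s \<in> nonfixed_times M J F"
  shows "\<exists>d>0. J \<inter> ball s d \<subseteq> nonfixed_times M J F"
proof -
  obtain A0 where sJ: "s \<in> J" and A0: "A0 \<in> M" "A0 *v F s \<noteq> F s"
    using s unfolding nonfixed_times_def by blast
  define x where "x = F s"
  have fin: "finite M" using grp unfolding matrix_group_def by simp
  obtain K where K: "K > 0" "\<And>A u v. A \<in> M \<Longrightarrow> dist (A *v u) (A *v v) \<le> K * dist u v"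
    using finite_matrices_lipschitz[OF fin] by blast
  define a where "a = dist (A0 *v x) x"
  have a: "a > 0" using A0 unfolding a_def x_def by simp
  define \<epsilon> where "\<epsilon> = a / (K + 1)"
  have \<epsilon>: "\<epsilon> > 0" "(K + 1) * \<epsilon> = a"
    using a K(1) unfolding \<epsilon>_def by simp_all
  obtain d where d: "d > 0" "\<forall>u\<in>J. dist u s < d \<longrightarrow> (\<exists>B\<in>M. dist (B *v F u) x < \<epsilon>)"
    using orbit_continuousD[OF oc sJ \<epsilon>(1)] unfolding x_def by blast
  have "\<exists>A\<in>M. A *v F u \<noteq> F u" if u: "u \<in> J" "dist u s < d" for u
  proof (rule ccontr)
    assume "\<not> ?thesis"
    then have fixed: "\<forall>A\<in>M. A *v F u = F u" by blast
    \<comment> \<open>then \<open>F u\<close> is close to \<open>x\<close>, and \<open>A0\<close> cannot move \<open>x\<close> by \<open>a\<close>\<close>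
    then have close: "dist (F u) x < \<epsilon>" using d u by force
    have "a \<le> dist (A0 *v x) (A0 *v F u) + dist (A0 *v F u) x"
      unfolding a_def by (rule dist_triangle)
    also have "\<dots> \<le> K * dist x (F u) + dist (F u) x"
      using K(2)[OF A0(1), of x "F u"] fixed A0(1) by simp
    also have "\<dots> < (K + 1) * \<epsilon>"
    proof -
      have "K * dist x (F u) < K * \<epsilon>" using close K(1) by (simp add: dist_commute)
      then show ?thesis using close by (simp add: distrib_right dist_commute)
    qed
    finally show False using \<epsilon>(2) by simp
  qed
  then have "J \<inter> ball s d \<subseteq> nonfixed_times M J F"
    unfolding nonfixed_times_def by (auto simp: dist_commute)
  then show ?thesis using d(1) by blast
qed

text \<open>Any selection from the orbits is continuous at a point where \<open>F\<close> is fixed by the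
  whole group: there the orbit is a single point and orbit-continuity is continuity.\<close>
lemma orbit_selection_continuous_at_fixed:
  fixes F :: "real \<Rightarrow> complex^'d::finite"
  assumes grp: "matrix_group M" and oc: "orbit_continuous M J F" and s: "s \<in> J"
    and fixed: "\<forall>A\<in>M. A *v F s = F s"
    and sel: "\<forall>u\<in>J. in_orbit M F u (f u)" and fs: "f s = F s"
  shows "continuous (at s within J) f"
  unfolding continuous_within_eps_delta
proof (intro allI impI)
  fix e :: real assume e: "e > 0"
  have fin: "finite M" using grp unfolding matrix_group_def by simp
  obtain K where K: "K > 0" "\<And>A u v. A \<in> M \<Longrightarrow> dist (A *v u) (A *v v) \<le> K * dist u v"
    using finite_matrices_lipschitz[OF fin] by blast
  have "e / K > 0" using e K(1) by simp
  then obtain d where d: "d > 0" "\<forall>u\<in>J. dist u s < d \<longrightarrow> (\<exists>B\<in>M. dist (B *v F u) (F s) < e / K)"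
    using orbit_continuousD[OF oc s] by blast
  show "\<exists>d>0. \<forall>u\<in>J. dist u s < d \<longrightarrow> dist (f u) (f s) < e"
  proof (intro exI[of _ d] conjI ballI impI)
    fix u assume u: "u \<in> J" "dist u s < d"
    then obtain B where B: "B \<in> M" "dist (B *v F u) (F s) < e / K" using d by blast
    obtain A where A: "A \<in> M" "f u = A *v F u" using sel u(1) unfolding in_orbit_def by blast
    obtain Bi where Bi: "Bi \<in> M" "\<forall>v. Bi *v (B *v v) = v"
      using matrix_group_inverse[OF grp B(1)] by blast
    have ABi: "A ** Bi \<in> M" using matrix_group_mult[OF grp A(1) Bi(1)] .
    have "f u = (A ** Bi) *v (B *v F u)"
      by (simp add: A(2) Bi(2) matrix_vector_mul_assoc[symmetric])
    moreover have "f s = (A ** Bi) *v F s"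
      using fixed ABi fs by simp
    ultimately have "dist (f u) (f s) = dist ((A ** Bi) *v (B *v F u)) ((A ** Bi) *v F s)"
      by simp
    also have "\<dots> \<le> K * dist (B *v F u) (F s)" by (rule K(2)[OF ABi])
    also have "\<dots> < K * (e / K)" using B(2) K(1) by (intro mult_strict_left_mono)
    finally show "dist (f u) (f s) < e" using K(1) by simp
  qed (rule d(1))
qed

text \<open>Inductive step, local part: if orbit-continuous paths can be lifted for all
  smaller groups, then near every non-fixed time a lift exists, obtained from the proper
  stabilizer of the current value.\<close>
lemma nonfixed_times_locally_liftable:
  fixes F :: "real \<Rightarrow> complex^'d::finite"
  assumes grp: "matrix_group M" and J: "is_interval J" and oc: "orbit_continuous M J F"
    and smaller_groups: "\<And>(M' :: (complex^'d^'d) set) J' (F' :: real \<Rightarrow> complex^'d).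
      card M' < card M \<Longrightarrow> matrix_group M' \<Longrightarrow> is_interval J' \<Longrightarrow> orbit_continuous M' J' F'
      \<Longrightarrow> \<exists>f. is_lift (in_orbit M' F') J' f"
  shows "locally_liftable (in_orbit M F) (nonfixed_times M J F)"
  unfolding locally_liftable_def
proof
  fix s assume "s \<in> nonfixed_times M J F"
  then obtain A0 where s: "s \<in> J" and A0: "A0 \<in> M" "A0 *v F s \<noteq> F s"
    unfolding nonfixed_times_def by blast
  define M' where "M' = {A\<in>M. A *v F s = F s}"
  obtain \<delta> F' where \<delta>: "\<delta> > 0" "orbit_continuous M' (J \<inter> ball s \<delta>) F'"
    and F': "\<forall>u\<in>J \<inter> ball s \<delta>. \<exists>B\<in>M. F' u = B *v F u"
    using orbit_continuous_stabilizer[OF grp oc s] unfolding M'_def by blast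
  have smaller: "card M' < card M"
    using A0 grp unfolding M'_def matrix_group_def by (intro psubset_card_mono) auto
  have grp': "matrix_group M'"
    unfolding M'_def by (rule matrix_group_stabilizer[OF grp])
  have "is_interval (J \<inter> ball s \<delta>)"
    using J by (simp add: is_interval_Int is_interval_ball_real)
  from smaller_groups[OF smaller grp' this \<delta>(2)]
  obtain f where f: "is_lift (in_orbit M' F') (J \<inter> ball s \<delta>) f"
    by blast
  \<comment> \<open>orbits of the stabilizer through \<open>F'\<close> lie in the orbits of \<open>M\<close> through \<open>F\<close>\<close>
  have "in_orbit M F u (f u)" if u: "u \<in> J \<inter> ball s \<delta>" for u
  proof -
    obtain A where A: "A \<in> M'" "f u = A *v F' u"
      using f u unfolding is_lift_def in_orbit_def by blast
    obtain B where B: "B \<in> M" "F' u = B *v F u" using F' u by blast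
    have "f u = (A ** B) *v F u" using A B by (simp add: matrix_vector_mul_assoc)
    moreover have "A ** B \<in> M"
      using A(1) B(1) matrix_group_mult[OF grp] unfolding M'_def by blast
    ultimately show ?thesis unfolding in_orbit_def by blast
  qed
  then have "is_lift (in_orbit M F) (nonfixed_times M J F \<inter> ball s \<delta>) f"
    using f unfolding is_lift_def nonfixed_times_def by (auto intro: continuous_on_subset)
  then show "\<exists>d>0. \<exists>f. is_lift (in_orbit M F) (nonfixed_times M J F \<inter> ball s d) f"
    using \<delta>(1) by blast
qed

text \<open>Inductive step, global part: a lift on the non-fixed times extends by \<open>F\<close> itself to
  a lift on all of \<open>J\<close>; continuity at the fixed times is automatic.\<close>
lemma lift_extend_by_fixed_values:
  fixes F :: "real \<Rightarrow> complex^'d::finite"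
  assumes grp: "matrix_group M" and oc: "orbit_continuous M J F"
    and g: "is_lift (in_orbit M F) (nonfixed_times M J F) g"
  shows "is_lift (in_orbit M F) J (\<lambda>s. if s \<in> nonfixed_times M J F then g s else F s)"
proof -
  define U where "U = nonfixed_times M J F"
  define f where "f s = (if s \<in> U then g s else F s)" for s
  have sel: "\<forall>s\<in>J. in_orbit M F s (f s)"
  proof
    fix s assume "s \<in> J"
    show "in_orbit M F s (f s)"
    proof (cases "s \<in> U")
      case True
      then show ?thesis using g unfolding f_def U_def is_lift_def by simp
    next
      case False
      have "mat 1 \<in> M" using grp unfolding matrix_group_def by simp
      then show ?thesis using False unfolding f_def in_orbit_def by (intro bexI[of _ "mat 1"]) simp_all
    qed
  qed
  have "continuous (at s within J) f" if s: "s \<in> J" for s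
  proof (cases "s \<in> U")
    case True
    \<comment> \<open>near \<open>s\<close>, \<open>J\<close> and \<open>U\<close> coincide and \<open>f = g\<close>\<close>
    obtain d where d: "d > 0" "J \<inter> ball s d \<subseteq> U"
      using orbit_continuous_nonfixed_open[OF grp oc] True unfolding U_def by blast
    have "continuous (at s within U) g"
      using g True unfolding U_def is_lift_def continuous_on_eq_continuous_within by blast
    moreover have "at s within U = at s within J"
      by (rule at_within_nhd[of s "ball s d"]) (use d in \<open>auto simp: U_def nonfixed_times_def\<close>)
    ultimately have "continuous (at s within J) g" by simp
    then show ?thesis
      by (rule continuous_transform_within[OF _ d(1) s])
         (use d in \<open>auto simp: f_def dist_commute\<close>)
  next
    case False
    then have "\<forall>A\<in>M. A *v F s = F s" "f s = F s"
      using s unfolding U_def nonfixed_times_def f_def by auto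
    then show ?thesis
      using orbit_selection_continuous_at_fixed[OF grp oc s _ sel] by blast
  qed
  then show ?thesis
    using sel unfolding is_lift_def continuous_on_eq_continuous_within f_def U_def by blast
qed

text \<open>By induction on the group
  order: local lifts on the relatively open set of non-fixed times are globalised there,
  and extended by the values of \<open>F\<close> at the fixed times.\<close>
lemma orbit_lift:
  fixes F :: "real \<Rightarrow> complex^'d::finite"
  assumes "matrix_group M" "is_interval J" "orbit_continuous M J F"
  shows "\<exists>f. is_lift (in_orbit M F) J f"
  using assms
proof (induction "card M" arbitrary: M J F rule: less_induct)
  case less
  note grp = less.prems(1) and J = less.prems(2) and oc = less.prems(3)
  have "locally_liftable (in_orbit M F) (nonfixed_times M J F)"
    using nonfixed_times_locally_liftable[OF grp J oc less.hyps] by blast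
  moreover have "nonfixed_times M J F \<subseteq> J"
    unfolding nonfixed_times_def by blast
  ultimately obtain g where "is_lift (in_orbit M F) (nonfixed_times M J F) g"
    using open_subset_lift[OF in_orbit_rebasable[OF grp] J _ orbit_continuous_nonfixed_open[OF grp oc]]
    by blast
  then show ?case
    using lift_extend_by_fixed_values[OF grp oc] by blast
qed

section \<open>The orbit map and lifting of curves\<close>

locale homogeneous_orbit_map =
  fixes M :: "(complex^'d::finite^'d) set" and \<sigma> :: "complex^'d \<Rightarrow> complex^'n::finite"
  assumes grp: "matrix_group M"
    and continuous: "continuous_on UNIV \<sigma>"
    and invariant: "\<And>A v. A \<in> M \<Longrightarrow> \<sigma> (A *v v) = \<sigma> v"
    and separates: "\<And>x y. \<sigma> x = \<sigma> y \<Longrightarrow> \<exists>A\<in>M. x = A *v y"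
    and homogeneous: "\<And>j. \<exists>k. homog_poly_fun k (\<lambda>x. \<sigma> x $ j)"
begin

definition degree :: "'n \<Rightarrow> nat" where
  "degree j = (SOME k. homog_poly_fun k (\<lambda>x. \<sigma> x $ j))"

lemma scale: "\<sigma> (r *\<^sub>R x) $ j = of_real r ^ degree j * \<sigma> x $ j"
proof -
  have "homog_poly_fun (degree j) (\<lambda>x. \<sigma> x $ j)"
    unfolding degree_def using homogeneous by (rule someI_ex)
  then show ?thesis by (rule homog_poly_fun_scaleR)
qed

text \<open>A gauge on the quotient, homogeneous of degree one along \<open>\<sigma>\<close>:
  \<open>\<psi>(\<sigma>(r x)) = r \<psi>(\<sigma> x)\<close>.\<close>
definition gauge :: "complex^'n \<Rightarrow> real" where
  "gauge z = (\<Sum>j\<in>{j. degree j \<ge> 1}. root (degree j) (cmod (z $ j)))"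

lemma gauge_nonneg: "gauge z \<ge> 0"
  unfolding gauge_def by (intro sum_nonneg real_root_ge_zero) auto

lemma gauge_continuous: "continuous_on UNIV gauge"
  unfolding gauge_def by (intro continuous_intros)

lemma gauge_scale:
  assumes "r \<ge> 0"
  shows "gauge (\<sigma> (r *\<^sub>R x)) = r * gauge (\<sigma> x)"
proof -
  have "root (degree j) (cmod (\<sigma> (r *\<^sub>R x) $ j)) = r * root (degree j) (cmod (\<sigma> x $ j))"
    if "degree j \<ge> 1" for j
  proof -
    have "cmod (\<sigma> (r *\<^sub>R x) $ j) = r ^ degree j * cmod (\<sigma> x $ j)"
      using assms by (simp add: scale norm_mult norm_power)
    then show ?thesis using that assms by (simp add: real_root_mult real_root_power_cancel)
  qed
  then show ?thesis unfolding gauge_def by (simp add: sum_distrib_left)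
qed

text \<open>Only the zero orbit has gauge zero: if all components of positive degree vanish,
  then \<open>\<sigma> u = \<sigma> 0\<close>, so \<open>u\<close> lies in the orbit of \<open>0\<close>.\<close>
lemma gauge_zero_imp_zero:
  assumes "gauge (\<sigma> u) = 0"
  shows "u = 0"
proof -
  have "\<sigma> u $ j = \<sigma> 0 $ j" for j
  proof (cases "degree j \<ge> 1")
    case True
    then have "root (degree j) (cmod (\<sigma> u $ j)) = 0"
      using assms unfolding gauge_def
      by (subst (asm) sum_nonneg_eq_0_iff) (auto intro: real_root_ge_zero)
    moreover have "\<sigma> 0 $ j = 0"
      using scale[of 0 0 j] True by (simp add: zero_power)
    ultimately show ?thesis using True by simp
  next
    case False
    then have "degree j = 0" by simp
    then show ?thesis using scale[of 0 u j] by simp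
  qed
  then have "\<sigma> u = \<sigma> 0" by (simp add: vec_eq_iff)
  then obtain A :: "complex^'d^'d" where "u = A *v 0" using separates[of u 0] by blast
  then show ?thesis by (simp add: matrix_vector_mult_0_right)
qed

text \<open>By homogeneity
  it suffices to bound the gauge from below on the unit sphere, where it attains a
  positive minimum.\<close>
lemma proper: "\<exists>m>0. \<forall>y. m * norm y \<le> gauge (\<sigma> y)"
proof -
  have cont: "continuous_on (sphere 0 1) (\<lambda>u. gauge (\<sigma> u))"
    using continuous_on_compose2[OF gauge_continuous continuous] by (auto intro: continuous_on_subset)
  obtain v :: "complex^'d" where "v \<noteq> 0"
    by (metis vec_eq_iff zero_index one_index zero_neq_one)
  then have "(1 / norm v) *\<^sub>R v \<in> sphere 0 1" by simp
  then have ne: "sphere (0::complex^'d) 1 \<noteq> {}" by blast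
  obtain u0 where u0: "u0 \<in> sphere 0 1" "\<forall>u\<in>sphere 0 1. gauge (\<sigma> u0) \<le> gauge (\<sigma> u)"
    using continuous_attains_inf[OF compact_sphere ne cont] by blast
  define m where "m = gauge (\<sigma> u0)"
  have "m \<noteq> 0" using u0(1) gauge_zero_imp_zero unfolding m_def by force
  then have m: "m > 0" using gauge_nonneg[of "\<sigma> u0"] unfolding m_def by linarith
  have "m * norm y \<le> gauge (\<sigma> y)" for y
  proof (cases "y = 0")
    case True
    then show ?thesis using gauge_nonneg by simp
  next
    case False
    define u where "u = (1 / norm y) *\<^sub>R y"
    have "u \<in> sphere 0 1" using False unfolding u_def by simp
    then have "m \<le> gauge (\<sigma> u)" using u0 unfolding m_def by blast
    moreover have "gauge (\<sigma> y) = norm y * gauge (\<sigma> u)"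
      using False gauge_scale[of "norm y" u] unfolding u_def by simp
    ultimately show ?thesis by (metis mult.commute mult_right_mono norm_ge_zero)
  qed
  then show ?thesis using m by blast
qed

text \<open>The set of bounded \<open>y\<close> whose
  whole orbit stays \<open>e\<close>-far from \<open>x0\<close> is compact and misses the fibre of \<open>\<sigma> x0\<close>.\<close>
lemma uniform_separation:
  assumes e: "e > 0"
  shows "\<exists>\<eta>>0. \<forall>y. norm y \<le> R \<longrightarrow> dist (\<sigma> y) (\<sigma> x0) < \<eta> \<longrightarrow> (\<exists>A\<in>M. dist (A *v y) x0 < e)"
proof -
  define Far where "Far = cball 0 R \<inter> (\<Inter>A\<in>M. {y. e \<le> dist (A *v y) x0})"
  have far: "y \<in> Far" if "norm y \<le> R" "\<not> (\<exists>A\<in>M. dist (A *v y) x0 < e)" for y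
    using that unfolding Far_def by (auto simp: not_less)
  show ?thesis
  proof (cases "Far = {}")
    case True
    then show ?thesis using far by (intro exI[of _ 1]) auto
  next
    case False
    have "closed {y. e \<le> dist (A *v y) x0}" for A :: "complex^'d^'d"
      by (intro closed_Collect_le continuous_intros)
    then have "compact Far" unfolding Far_def
      by (intro compact_Int_closed compact_cball closed_INT) auto
    moreover have "continuous_on Far (\<lambda>y. dist (\<sigma> y) (\<sigma> x0))"
      using continuous_on_subset[OF continuous] by (intro continuous_intros) auto
    ultimately obtain y0 where y0: "y0 \<in> Far" "\<forall>y\<in>Far. dist (\<sigma> y0) (\<sigma> x0) \<le> dist (\<sigma> y) (\<sigma> x0)"
      using continuous_attains_inf[OF _ False] by blast
    have "dist (\<sigma> y0) (\<sigma> x0) > 0"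
    proof (rule ccontr)
      assume "\<not> ?thesis"
      then obtain A where A: "A \<in> M" "x0 = A *v y0" using separates[of x0 y0] by auto
      then have "e \<le> dist (A *v y0) x0" using y0(1) unfolding Far_def by blast
      then show False using A e by simp
    qed
    then show ?thesis
      using y0(2) far by (intro exI[of _ "dist (\<sigma> y0) (\<sigma> x0)"]) force
  qed
qed

text \<open>Any section \<open>F\<close> of a continuous curve \<open>c\<close> in the image of \<open>\<sigma>\<close> is orbit-continuous:
  properness keeps \<open>F\<close> locally bounded, and uniform separation turns closeness of
  \<open>c\<close>-values into closeness of orbits.\<close>
lemma section_orbit_continuous:
  assumes c: "continuous_on I c" and F: "\<And>t. t \<in> I \<Longrightarrow> \<sigma> (F t) = c t"
  shows "orbit_continuous M I F"
  unfolding orbit_continuous_def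
proof (intro ballI allI impI)
  fix t e assume t: "t \<in> I" and e: "(0::real) < e"
  obtain m where m: "m > 0" "\<And>y. m * norm y \<le> gauge (\<sigma> y)" using proper by blast
  define R where "R = gauge (c t) / m + 1"
  obtain \<eta> where \<eta>: "\<eta> > 0"
    "\<forall>y. norm y \<le> R \<longrightarrow> dist (\<sigma> y) (\<sigma> (F t)) < \<eta> \<longrightarrow> (\<exists>A\<in>M. dist (A *v y) (F t) < e)"
    using uniform_separation[OF e] by blast
  have "continuous_on I (\<lambda>s. gauge (c s))"
    using continuous_on_compose2[OF gauge_continuous c] by auto
  then obtain d1 where d1: "d1 > 0" "\<forall>s\<in>I. dist s t < d1 \<longrightarrow> dist (gauge (c s)) (gauge (c t)) < m"
    using t m(1) unfolding continuous_on_iff by blast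
  obtain d2 where d2: "d2 > 0" "\<forall>s\<in>I. dist s t < d2 \<longrightarrow> dist (c s) (c t) < \<eta>"
    using c t \<eta>(1) unfolding continuous_on_iff by blast
  show "\<exists>d>0. \<forall>s\<in>I. dist s t < d \<longrightarrow> (\<exists>A\<in>M. dist (A *v F s) (F t) < e)"
  proof (intro exI[of _ "min d1 d2"] conjI ballI impI)
    show "min d1 d2 > 0" using d1 d2 by simp
    fix s assume s: "s \<in> I" "dist s t < min d1 d2"
    have "m * norm (F s) \<le> gauge (c s)" using m(2)[of "F s"] F[OF s(1)] by simp
    also have "\<dots> < gauge (c t) + m" using d1 s by (auto simp: dist_real_def)
    also have "\<dots> = m * R" unfolding R_def using m(1) by (simp add: field_simps)
    finally have "norm (F s) \<le> R" using m(1) by simp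
    moreover have "dist (\<sigma> (F s)) (\<sigma> (F t)) < \<eta>" using d2 s F[OF s(1)] F[OF t] by auto
    ultimately show "\<exists>A\<in>M. dist (A *v F s) (F t) < e" using \<eta>(2) by blast
  qed
qed

text \<open>Lifting of continuous curves in the image of \<open>\<sigma>\<close>: choose an arbitrary section,
  which is orbit-continuous, and select continuously from its orbits.\<close>
lemma curve_lift:
  fixes I :: "real set" and c :: "real \<Rightarrow> complex^'n"
  assumes I: "is_interval I" and c: "continuous_on I c" and cI: "c ` I \<subseteq> range \<sigma>"
  shows "\<exists>cbar. continuous_on I cbar \<and> (\<forall>t\<in>I. \<sigma> (cbar t) = c t)"
proof -
  define F where "F t = (SOME x. \<sigma> x = c t)" for t
  have F: "\<sigma> (F t) = c t" if t: "t \<in> I" for t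
  proof -
    have "\<exists>x. \<sigma> x = c t" using cI t by (metis image_subset_iff rangeE)
    then show ?thesis unfolding F_def by (rule someI_ex)
  qed
  obtain f where f: "is_lift (in_orbit M F) I f"
    using orbit_lift[OF grp I section_orbit_continuous[OF c F]] by blast
  have "\<sigma> (f t) = c t" if t: "t \<in> I" for t
  proof -
    obtain A where "A \<in> M" "f t = A *v F t"
      using f t unfolding is_lift_def in_orbit_def by blast
    then show ?thesis using invariant F[OF t] by simp
  qed
  then show ?thesis using f unfolding is_lift_def by blast
qed

end

lemma hom_generators_orbit_map:
  assumes la: "linear_action Gr \<rho>" and fin: "finite (carrier Gr)" and hg: "hom_generators Gr \<rho> \<sigma>"
  shows "homogeneous_orbit_map (\<rho> ` carrier Gr) \<sigma>"
proof
  show "matrix_group (\<rho> ` carrier Gr)" using la fin by (rule linear_action_matrix_group)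
  have "continuous_on UNIV (\<lambda>x. \<chi> j. \<sigma> x $ j)"
    using hg unfolding hom_generators_def invariant_poly_def
    by (intro continuous_on_vec_lambda poly_fun_continuous) blast
  then show "continuous_on UNIV \<sigma>" by simp
  show "\<sigma> (A *v v) = \<sigma> v" if "A \<in> \<rho> ` carrier Gr" for A v
    using hom_generators_invariant[OF hg that] .
  show "\<exists>A\<in>\<rho> ` carrier Gr. x = A *v y" if "\<sigma> x = \<sigma> y" for x y
    using hom_generators_separate_orbits[OF la fin hg that] .
  show "\<exists>k. homog_poly_fun k (\<lambda>x. \<sigma> x $ j)" for j
    using hg unfolding hom_generators_def by blast
qed

theorem theorem5p1:
  fixes Gr :: "('g, 'b) monoid_scheme"
    and \<rho> :: "'g \<Rightarrow> complex^'d::finite^'d"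
    and \<sigma> :: "complex^'d \<Rightarrow> complex^'n::finite"
    and I :: "real set"
    and c :: "real \<Rightarrow> complex^'n"
  assumes "linear_action Gr \<rho>"
    and "finite (carrier Gr)"
    and "hom_generators Gr \<rho> \<sigma>"
    and "is_interval I"
    and "continuous_on I c"
    and "c ` I \<subseteq> range \<sigma>"
  shows "\<exists>cbar :: real \<Rightarrow> complex^'d. continuous_on I cbar \<and> (\<forall>t\<in>I. \<sigma> (cbar t) = c t)"
  using homogeneous_orbit_map.curve_lift[OF hom_generators_orbit_map[OF assms(1-3)] assms(4-6)] .

end
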